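(* Let $\mu$ be measurable with $\|\mu\|_\infty\leqslant1$ and $\operatorname{supp}\mu\subset A(\rho_0,\rho_1)$, where $0<\rho_0<\rho_1<1$. Let $\rho_1<r_1<1$ and $\varepsilon>0$. Then there exists a measurable $\tilde\mu$ such that: (i) $\operatorname{supp}\tilde\mu\subset A(\rho_0,r_1)$; (ii) $\|\tilde\mu-\mu\|_\infty<\varepsilon$; (iii) $\mathcal C\tilde\mu(0)=\mathcal C\mu(0)$; (iv) $\mathcal C\tilde\mu$ is, on $\{|z|>1\}$, a polynomial in $z^{-1}$.
   Context: $A(\rho,R)=\{\rho<|z|<R\}$. $\mathcal C\mu(z)=\frac{1}{\pi}\int_{\mathbb{C}}\frac{\mu(\zeta)}{z-\zeta}\,dm(\zeta)$ is the Cauchy transform. *)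

theory Defs
  imports "HOL-Probability.Essential_Supremum" "HOL-Computational_Algebra.Polynomial"
begin

definition annulus :: "real \<Rightarrow> real \<Rightarrow> complex set" where
  "annulus \<rho> R = {z. \<rho> < norm z \<and> norm z < R}"

definition esupp :: "(complex \<Rightarrow> complex) \<Rightarrow> complex set" where
  "esupp f = - \<Union>{U. open U \<and> (AE z in lebesgue. z \<in> U \<longrightarrow> f z = 0)}"

definition Linf_norm :: "(complex \<Rightarrow> complex) \<Rightarrow> ereal" where
  "Linf_norm f = esssup lebesgue (\<lambda>z. ereal (norm (f z)))"

definition cauchy_transform :: "(complex \<Rightarrow> complex) \<Rightarrow> complex \<Rightarrow> complex" where
  "cauchy_transform \<mu> z = (1 / of_real pi) * (LINT \<zeta>|lebesgue. \<mu> \<zeta> / (z - \<zeta>))"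

end

(*
  Choose radii \<rho>1 < b < c < r1 with \<rho>1 c < b\<^sup>2 and let A be the annulus b < |z| < c.
  Lebesgue measure is invariant under z \<mapsto> w z for a unit w that is not a root of unity
  (e.g. w = (3 + 4i)/5), so over A the functions conj z ^ n * z ^ k (n \<noteq> k) and
  conj z ^ n / z integrate to zero. Hence \<nu> = 1_A \<Sum>_{k\<ge>N} d_k conj z ^ k with
  d_k = - (\<integral> \<mu> z ^ k) / (\<integral>_A |z| ^ 2k) kills every moment of \<mu> of order at least N without
  changing \<integral> \<mu> / z, and |d_k| c ^ k = O((\<rho>1 c / b\<^sup>2) ^ k), so \<nu> is uniformly small for large N.
  Outside the unit disc the Cauchy transform of \<mu> + \<nu> is \<Sum>_k (\<integral> (\<mu> + \<nu>) z ^ k) / (\<pi> z ^ (k+1)),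
  now a finite sum, i.e. a polynomial in 1/z.
*)

theory Submission
  imports Defs
begin

section \<open>Rotation invariance of Lebesgue measure on the plane\<close>

lemma borel_measurable_Complex_pair [measurable]: "(\<lambda>(x, y). Complex x y) \<in> borel_measurable borel"
proof -
  have "(\<lambda>(x, y). Complex x y) = (\<lambda>p. complex_of_real (fst p) + \<i> * complex_of_real (snd p))"
    by (auto simp: complex_eq_iff)
  then show ?thesis
    by (auto intro!: borel_measurable_continuous_onI continuous_intros)
qed

lemma lborel_complex_eq_distr_pair:
  "(lborel :: complex measure) = distr lborel borel (\<lambda>(x, y). Complex x y)"
proof (rule lborel_eqI)
  fix l u :: complex
  assume le: "\<And>b. b \<in> Basis \<Longrightarrow> l \<bullet> b \<le> u \<bullet> b"
  then have "Re l \<le> Re u" "Im l \<le> Im u"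
    using le[of 1] le[of \<i>] by (auto simp: Basis_complex_def)
  moreover have "(\<lambda>(x, y). Complex x y) -` box l u = {Re l<..<Re u} \<times> {Im l<..<Im u}"
    by (auto simp: box_def Basis_complex_def)
  then have "emeasure (distr lborel borel (\<lambda>(x, y). Complex x y)) (box l u)
      = emeasure (lborel \<Otimes>\<^sub>M lborel) ({Re l<..<Re u} \<times> {Im l<..<Im u})"
    by (subst emeasure_distr) (simp_all add: lborel_prod)
  ultimately show "emeasure (distr lborel borel (\<lambda>(x, y). Complex x y)) (box l u)
      = ennreal (\<Prod>b\<in>Basis. (u - l) \<bullet> b)"
    by (simp add: lborel.emeasure_pair_measure_Times Basis_complex_def ennreal_mult)
qed simp

lemma distr_lborel_shear_fst:
  "distr lborel borel (\<lambda>(x::real, y::real). (x + a * y, y)) = lborel"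
  (is "distr _ _ ?S = _")
  unfolding lborel_prod[symmetric]
proof (rule measure_eqI)
  let ?P = "lborel \<Otimes>\<^sub>M lborel :: (real \<times> real) measure"
  have sets_P: "sets ?P = sets borel"
    by (metis lborel_prod sets_lborel)
  then show "sets (distr ?P borel ?S) = sets ?P"
    by simp
  fix A assume "A \<in> sets (distr ?P borel ?S)"
  then have A_borel [measurable]: "A \<in> sets borel" and A [measurable]: "A \<in> sets ?P"
    by (simp_all only: sets_distr sets_P)
  have "emeasure (distr ?P borel ?S) A = (\<integral>\<^sup>+p. indicator A p \<partial>distr ?P borel ?S)"
    by simp
  also have "\<dots> = (\<integral>\<^sup>+p. indicator A (?S p) \<partial>?P)"
    by (rule nn_integral_distr) simp_all
  also have "\<dots> = (\<integral>\<^sup>+y. (\<integral>\<^sup>+x. indicator A (x + a * y, y) \<partial>lborel) \<partial>lborel)"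
    by (subst lborel_pair.nn_integral_snd[symmetric]) auto
  also have "\<dots> = (\<integral>\<^sup>+y. (\<integral>\<^sup>+x. indicator A (x, y) \<partial>lborel) \<partial>lborel)"
  proof (rule nn_integral_cong)
    fix y :: real
    show "(\<integral>\<^sup>+x. indicator A (x + a * y, y) \<partial>lborel) = (\<integral>\<^sup>+x. indicator A (x, y) \<partial>lborel)"
      using nn_integral_real_affine[of "\<lambda>x. indicator A (x, y) :: ennreal" 1 "a * y"]
      by (simp add: add.commute)
  qed
  also have "\<dots> = emeasure ?P A"
    by (subst lborel_pair.nn_integral_snd) (simp_all add: nn_integral_indicator[OF A])
  finally show "emeasure (distr ?P borel ?S) A = emeasure ?P A" .
qed

lemma distr_lborel_swap:
  "distr lborel borel (\<lambda>(x::real, y::real). (y, x)) = lborel"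
  unfolding lborel_prod[symmetric]
  by (subst (2) lborel_pair.distr_pair_swap)
    (rule distr_cong, simp, simp only: sets_lborel lborel_prod, simp)

lemma distr_lborel_comp:
  fixes f g :: "'a::euclidean_space \<Rightarrow> 'a"
  assumes [measurable]: "f \<in> borel_measurable borel" "g \<in> borel_measurable borel"
    and "distr lborel borel f = lborel" and "distr lborel borel g = lborel"
  shows "distr lborel borel (g \<circ> f) = lborel"
  by (subst distr_distr[of g borel borel, symmetric]) (simp_all add: assms(3,4))

lemma distr_lborel_shear_snd:
  "distr lborel borel (\<lambda>(x::real, y::real). (x, y + a * x)) = lborel"
proof -
  let ?swap = "\<lambda>(x::real, y::real). (y, x)"
  have "(\<lambda>(x, y). (x, y + a * x)) = ?swap \<circ> ((\<lambda>(x, y). (x + a * y, y)) \<circ> ?swap)"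
    by auto
  then show ?thesis
    by (simp only:) (intro distr_lborel_comp distr_lborel_swap distr_lborel_shear_fst;
        unfold case_prod_beta' o_def; intro borel_measurable_continuous_onI continuous_intros)
qed

lemma distr_lborel_rotation_if_ne_minus_one:
  assumes "norm w = 1" and "w \<noteq> -1"
  shows "distr lborel borel (\<lambda>z::complex. w * z) = lborel"
proof -
  let ?F = "\<lambda>(x, y). Complex x y"
  \<comment> \<open>Three-shear decomposition of the rotation, with \<open>t = tan (arg w / 2)\<close>.\<close>
  define t where "t = Im w / (1 + Re w)"
  have unit: "Re w ^ 2 + Im w ^ 2 = 1"
    using assms(1) by (simp add: cmod_def)
  have "1 + Re w \<noteq> 0"
  proof
    assume "1 + Re w = 0"
    then have "Re w = -1"
      by simp
    moreover from this have "Im w = 0"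
      using unit by simp
    ultimately show False
      using assms(2)
      by (simp add: complex_eq_iff)
  qed
  then have t_Re: "t * (1 + Re w) = Im w" and t_Im: "t * Im w = 1 - Re w"
    using unit by (auto simp: t_def field_simps power2_eq_square)
  define S where "S = (\<lambda>(x, y). (x + (- t) * y, y))
    \<circ> ((\<lambda>(x, y). (x, y + Im w * x)) \<circ> (\<lambda>(x, y). (x + (- t) * y, y)))"
  have rotation_eq: "(\<lambda>z. w * z) \<circ> ?F = ?F \<circ> S"
  proof
    fix p :: "real \<times> real"
    obtain x y where p: "p = (x, y)"
      by fastforce
    have "x - t * y - t * (y + Im w * (x - t * y)) = (1 - t * Im w) * x - t * (2 - t * Im w) * y"
      by (simp add: algebra_simps power2_eq_square)
    also have "\<dots> = Re w * x - Im w * y"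
      using t_Re t_Im by simp
    finally have "x - t * y - t * (y + Im w * (x - t * y)) = Re w * x - Im w * y" .
    moreover have "y + Im w * (x - t * y) = Im w * x + (1 - t * Im w) * y"
      by (simp add: algebra_simps)
    ultimately show "((\<lambda>z. w * z) \<circ> ?F) p = (?F \<circ> S) p"
      using t_Im by (simp add: p S_def complex_eq_iff algebra_simps)
  qed
  have S_measurable [measurable]: "S \<in> borel_measurable borel"
    unfolding S_def case_prod_beta' o_def
    by (intro borel_measurable_continuous_onI continuous_intros)
  have "distr lborel borel S = lborel"
    unfolding S_def
    by (intro distr_lborel_comp distr_lborel_shear_fst distr_lborel_shear_snd;
        unfold case_prod_beta' o_def; intro borel_measurable_continuous_onI continuous_intros)
  then have "lborel = distr (distr lborel borel S) borel ?F"
    by (simp flip: lborel_complex_eq_distr_pair)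
  also have "\<dots> = distr lborel borel ((\<lambda>z. w * z) \<circ> ?F)"
    by (simp add: distr_distr rotation_eq)
  also have "\<dots> = distr lborel borel (\<lambda>z. w * z)"
    by (subst distr_distr[of _ borel, symmetric]) (simp_all flip: lborel_complex_eq_distr_pair)
  finally show ?thesis ..
qed

lemma distr_lborel_rotation:
  assumes "norm w = 1"
  shows "distr lborel borel (\<lambda>z::complex. w * z) = lborel"
proof (cases "w = -1")
  case True
  have "(\<lambda>z::complex. w * z) = (\<lambda>z. \<i> * z) \<circ> (\<lambda>z. \<i> * z)"
    using True by auto
  then show ?thesis
    by (simp only:) (intro distr_lborel_comp distr_lborel_rotation_if_ne_minus_one; simp add: complex_eq_iff)
qed (use assms distr_lborel_rotation_if_ne_minus_one in auto)

lemma integral_lebesgue_rotation: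
  fixes g :: "complex \<Rightarrow> 'b::{banach, second_countable_topology}"
  assumes "norm w = 1" and [measurable]: "g \<in> borel_measurable borel"
  shows "(LINT z|lebesgue. g (w * z)) = integral\<^sup>L lebesgue g"
proof -
  have "integral\<^sup>L lebesgue g = integral\<^sup>L lborel g"
    by (simp add: integral_completion)
  also have "\<dots> = integral\<^sup>L (distr lborel borel (\<lambda>z. w * z)) g"
    by (simp only: distr_lborel_rotation[OF assms(1)])
  also have "\<dots> = (LINT z|lborel. g (w * z))"
    by (rule integral_distr) simp_all
  also have "\<dots> = (LINT z|lebesgue. g (w * z))"
    by (simp add: integral_completion)
  finally show ?thesis ..
qed

lemma integral_lebesgue_eq_0_if_rotation_twisted:
  fixes g :: "complex \<Rightarrow> complex"
  assumes "norm w = 1" and "g \<in> borel_measurable borel"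
    and "\<And>z. g (w * z) = c * g z" and "c \<noteq> 1"
  shows "integral\<^sup>L lebesgue g = 0"
proof -
  have "integral\<^sup>L lebesgue g = c * integral\<^sup>L lebesgue g"
    using integral_lebesgue_rotation[OF assms(1,2)] by (simp add: assms(3))
  with assms(4) show ?thesis
    by (metis mult_cancel_right1)
qed

lemma Complex_3_4_power_mod_5:
  assumes "k > 0"
  shows "\<exists>a b::int. Complex 3 4 ^ k = Complex (of_int a) (of_int b) \<and> a mod 5 = 3 \<and> b mod 5 = 4"
  using assms
proof (induction k)
  case (Suc k)
  show ?case
  proof (cases "k = 0")
    case False
    then obtain a b :: int
      where ab: "Complex 3 4 ^ k = Complex (of_int a) (of_int b)" "a mod 5 = 3" "b mod 5 = 4"
      using Suc by auto
    show ?thesis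
    proof (intro exI conjI)
      show "Complex 3 4 ^ Suc k = Complex (of_int (3 * a - 4 * b)) (of_int (4 * a + 3 * b))"
        using ab(1) by (simp add: complex_eq_iff algebra_simps)
      show "(3 * a - 4 * b) mod 5 = 3" "(4 * a + 3 * b) mod 5 = 4"
        using ab(2,3) by (simp_all add: mod_diff_eq[symmetric] mod_add_eq[symmetric]
            mod_mult_right_eq[symmetric])
    qed
  qed (intro exI[of _ 3] exI[of _ 4]; simp)
qed simp

lemma exists_unit_not_root_of_unity: "\<exists>w::complex. norm w = 1 \<and> (\<forall>k>0. w ^ k \<noteq> 1)"
proof (intro exI conjI allI impI)
  let ?w = "Complex (3 / 5) (4 / 5)"
  show "norm ?w = 1"
    by (simp add: cmod_def power2_eq_square)
  fix k :: nat
  assume "k > 0"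
  then obtain a b :: int where ab: "Complex 3 4 ^ k = Complex (of_int a) (of_int b)" "b mod 5 = 4"
    using Complex_3_4_power_mod_5 by blast
  have "Complex 3 4 = 5 * ?w"
    by (simp add: complex_eq_iff)
  then have "Complex 3 4 ^ k = 5 ^ k * ?w ^ k"
    by (simp only: power_mult_distrib)
  show "?w ^ k \<noteq> 1"
  proof
    assume "?w ^ k = 1"
    then have "Complex 3 4 ^ k = of_real (5 ^ k)"
      using \<open>Complex 3 4 ^ k = 5 ^ k * ?w ^ k\<close> by simp
    with ab show False
      by (auto simp: complex_eq_iff)
  qed
qed

section \<open>Measurability, essential support and essential bounds\<close>

lemma borel_measurable_lebesgue_ident [measurable]:
  "(\<lambda>z::'a::euclidean_space. z) \<in> borel_measurable lebesgue"
  using id_borel_measurable_lebesgue by (simp add: id_def)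

lemma borel_measurable_lebesgue_if_borel:
  "f \<in> borel_measurable borel \<Longrightarrow> f \<in> borel_measurable lebesgue"
  by (rule measurable_completion) (simp add: measurable_cong_sets[OF sets_lborel refl])

lemma open_annulus: "open (annulus b c)"
  unfolding annulus_def by (intro open_Collect_conj open_Collect_less continuous_intros)

lemma sets_borel_annulus [measurable]: "annulus b c \<in> sets borel"
  by (rule borel_open[OF open_annulus])

lemma lmeasurable_annulus: "annulus b c \<in> lmeasurable"
proof (rule lmeasurable_open[OF _ open_annulus])
  show "bounded (annulus b c)"
    by (rule bounded_subset[OF bounded_ball[of 0 c]]) (auto simp: annulus_def)
qed

lemma AE_norm_le_if_Linf_norm_le:
  assumes "Linf_norm f \<le> ereal B"
  shows "AE z in lebesgue. norm (f z) \<le> B"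
proof -
  have "AE z in lebesgue. ereal (norm (f z)) \<le> Linf_norm f"
    unfolding Linf_norm_def by (rule esssup_AE)
  then show ?thesis
    by eventually_elim (metis assms ereal_less_eq(3) order_trans)
qed

lemma Linf_norm_le:
  assumes "f \<in> borel_measurable lebesgue" and "\<And>z. norm (f z) \<le> B"
  shows "Linf_norm f \<le> ereal B"
  unfolding Linf_norm_def using assms by (intro esssup_I) auto

lemma closed_esupp: "closed (esupp f)"
  unfolding esupp_def by (intro closed_Compl open_Union) auto

lemma AE_eq_0_outside_esupp: "AE z in lebesgue. z \<notin> esupp f \<longrightarrow> f z = 0"
proof -
  let ?U = "{U. open U \<and> (AE z in lebesgue. z \<in> U \<longrightarrow> f z = 0)}"
  obtain U' where U': "U' \<subseteq> ?U" "countable U'" "\<Union>U' = \<Union>?U"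
    using Lindelof[of ?U] by auto
  have "AE z in lebesgue. \<forall>U\<in>U'. z \<in> U \<longrightarrow> f z = 0"
    using U'(1,2) by (subst AE_ball_countable) auto
  then show ?thesis
    by eventually_elim (use U'(3) in \<open>auto simp: esupp_def\<close>)
qed

lemma esupp_subset_if_AE_eq_0:
  assumes "closed S" and "AE z in lebesgue. z \<notin> S \<longrightarrow> f z = 0"
  shows "esupp f \<subseteq> S"
  using assms unfolding esupp_def by (auto intro!: open_Compl)

lemma esupp_add_subset: "esupp (\<lambda>z. f z + g z) \<subseteq> esupp f \<union> esupp g"
proof (rule esupp_subset_if_AE_eq_0)
  show "closed (esupp f \<union> esupp g)"
    by (intro closed_Un closed_esupp)
  show "AE z in lebesgue. z \<notin> esupp f \<union> esupp g \<longrightarrow> f z + g z = 0"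
    using AE_eq_0_outside_esupp[of f] AE_eq_0_outside_esupp[of g] by eventually_elim auto
qed

lemma AE_norm_le_indicator_if_esupp_subset:
  assumes "Linf_norm f \<le> ereal M" and "esupp f \<subseteq> S"
  shows "AE z in lebesgue. norm (f z) \<le> M * indicator S z"
  using AE_norm_le_if_Linf_norm_le[OF assms(1)] AE_eq_0_outside_esupp[of f]
  by eventually_elim (use assms(2) in \<open>auto simp: indicator_def\<close>)

lemma AE_norm_le_indicator_mono:
  assumes "AE z in lebesgue. norm (f z) \<le> M * indicator S z" and "S \<subseteq> T" and "0 \<le> M"
  shows "AE z in lebesgue. norm (f z) \<le> M * indicator T z"
  using assms(1)
proof eventually_elim
  case (elim z)
  then show ?case
    using assms(2,3) by (cases "z \<in> S") auto
qed

lemma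
  fixes g :: "complex \<Rightarrow> 'b::{banach, second_countable_topology}"
  assumes "g \<in> borel_measurable lebesgue" and "S \<in> lmeasurable"
    and bound: "AE z in lebesgue. norm (g z) \<le> B * indicator S z"
  shows integrable_if_norm_le_indicator: "integrable lebesgue g"
    and integral_norm_le_indicator: "(LINT z|lebesgue. norm (g z)) \<le> B * measure lebesgue S"
    and norm_integral_le_indicator: "norm (integral\<^sup>L lebesgue g) \<le> B * measure lebesgue S"
proof -
  have bound_integrable: "integrable lebesgue (\<lambda>z. B * indicator S z :: real)"
    using assms(2) by (intro integrable_mult_right) (auto simp: fmeasurable_def)
  show integrable: "integrable lebesgue g"
    by (rule Bochner_Integration.integrable_bound[OF bound_integrable assms(1)])
      (use bound in \<open>eventually_elim, auto simp: indicator_def\<close>)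
  have "(LINT z|lebesgue. norm (g z)) \<le> (LINT z|lebesgue. B * indicator S z)"
    by (rule integral_mono_AE) (use integrable bound_integrable bound in auto)
  also have "\<dots> = B * measure lebesgue S"
    by simp
  finally show integral_norm: "(LINT z|lebesgue. norm (g z)) \<le> B * measure lebesgue S" .
  show "norm (integral\<^sup>L lebesgue g) \<le> B * measure lebesgue S"
    using integral_norm_bound[of lebesgue g] integral_norm by linarith
qed

section \<open>Moments and the Cauchy transform outside a disc\<close>

definition moment :: "(complex \<Rightarrow> complex) \<Rightarrow> nat \<Rightarrow> complex" where
  "moment f k = (LINT z|lebesgue. f z * z ^ k)"

lemma moment_add:
  assumes "integrable lebesgue (\<lambda>z. f z * z ^ k)" and "integrable lebesgue (\<lambda>z. g z * z ^ k)"
  shows "moment (\<lambda>z. f z + g z) k = moment f k + moment g k"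
  unfolding moment_def distrib_right by (rule Bochner_Integration.integral_add[OF assms])

lemma cauchy_transform_add:
  assumes "integrable lebesgue (\<lambda>\<zeta>. f \<zeta> / (z - \<zeta>))" and "integrable lebesgue (\<lambda>\<zeta>. g \<zeta> / (z - \<zeta>))"
  shows "cauchy_transform (\<lambda>\<zeta>. f \<zeta> + g \<zeta>) z = cauchy_transform f z + cauchy_transform g z"
  unfolding cauchy_transform_def add_divide_distrib
  by (simp add: Bochner_Integration.integral_add[OF assms] distrib_left)

lemma integrable_cauchy_kernel_0:
  fixes f :: "complex \<Rightarrow> complex"
  assumes "f \<in> borel_measurable lebesgue"
    and bound: "AE \<zeta> in lebesgue. norm (f \<zeta>) \<le> M * indicator (annulus r R) \<zeta>" and "0 < r"
  shows "integrable lebesgue (\<lambda>\<zeta>. f \<zeta> / (0 - \<zeta>))"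
proof (rule integrable_if_norm_le_indicator[OF _ lmeasurable_annulus])
  show "AE \<zeta> in lebesgue. norm (f \<zeta> / (0 - \<zeta>)) \<le> M / r * indicator (annulus r R) \<zeta>"
    using bound
  proof eventually_elim
    case (elim \<zeta>)
    show ?case
    proof (cases "\<zeta> \<in> annulus r R")
      case True
      then have "norm (f \<zeta>) / norm \<zeta> \<le> M / r"
        using elim \<open>0 < r\<close> by (intro frac_le) (auto simp: annulus_def intro: order_trans[OF norm_ge_zero])
      then show ?thesis
        using True by (simp add: norm_divide)
    qed (use elim in simp)
  qed
qed (use assms(1) in measurable)

lemma sums_integral_if_norm_le_indicator:
  fixes f :: "nat \<Rightarrow> complex \<Rightarrow> 'b::{banach, second_countable_topology}"
  assumes [measurable]: "\<And>n. f n \<in> borel_measurable lebesgue" and "S \<in> lmeasurable"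
    and bound: "\<And>n. AE z in lebesgue. norm (f n z) \<le> a n * indicator S z"
    and "summable a"
  shows "(\<lambda>n. integral\<^sup>L lebesgue (f n)) sums (LINT z|lebesgue. (\<Sum>n. f n z))"
proof (rule sums_integral)
  show "integrable lebesgue (f n)" for n
    using assms(2) bound by (rule integrable_if_norm_le_indicator[OF assms(1)])
  have "AE z in lebesgue. \<forall>n. norm (f n z) \<le> a n * indicator S z"
    using bound by (simp add: AE_all_countable)
  then show "AE z in lebesgue. summable (\<lambda>n. norm (f n z))"
  proof eventually_elim
    case (elim z)
    show ?case
      by (rule summable_comparison_test'[of "\<lambda>n. a n * indicator S z" 0])
        (use elim summable_mult2[OF \<open>summable a\<close>] in auto)
  qed
  show "summable (\<lambda>n. LINT z|lebesgue. norm (f n z))"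
  proof (rule summable_comparison_test'[of "\<lambda>n. a n * measure lebesgue S" 0])
    show "summable (\<lambda>n. a n * measure lebesgue S)"
      using \<open>summable a\<close> by (rule summable_mult2)
    show "norm (LINT z|lebesgue. norm (f n z)) \<le> a n * measure lebesgue S" for n
      using integral_norm_le_indicator[OF assms(1,2) bound] by simp
  qed
qed

lemma
  fixes f :: "complex \<Rightarrow> complex"
  assumes [measurable]: "f \<in> borel_measurable lebesgue"
    and bound: "AE z in lebesgue. norm (f z) \<le> M * indicator (ball 0 \<rho>) z"
  shows integrable_moment: "integrable lebesgue (\<lambda>z. f z * z ^ k)"
    and norm_moment_le: "norm (moment f k) \<le> M * \<rho> ^ k * measure lebesgue (ball (0::complex) \<rho>)"
proof -
  have moment_bound: "AE z in lebesgue. norm (f z * z ^ k) \<le> M * \<rho> ^ k * indicator (ball 0 \<rho>) z"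
    using bound
  proof eventually_elim
    case (elim z)
    show ?case
    proof (cases "z \<in> ball 0 \<rho>")
      case True
      then have "norm (f z) * norm z ^ k \<le> M * \<rho> ^ k"
        using elim by (intro mult_mono power_mono) (auto intro: order_trans[OF norm_ge_zero])
      then show ?thesis
        using True by (simp add: norm_mult norm_power)
    qed (use elim in simp)
  qed
  have measurable: "(\<lambda>z. f z * z ^ k) \<in> borel_measurable lebesgue"
    by measurable
  show "integrable lebesgue (\<lambda>z. f z * z ^ k)"
    by (rule integrable_if_norm_le_indicator[OF measurable lmeasurable_ball moment_bound])
  show "norm (moment f k) \<le> M * \<rho> ^ k * measure lebesgue (ball (0::complex) \<rho>)"
    unfolding moment_def by (rule norm_integral_le_indicator[OF measurable lmeasurable_ball moment_bound])
qed

lemma moment_div_power_sums: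
  fixes f :: "complex \<Rightarrow> complex"
  assumes [measurable]: "f \<in> borel_measurable lebesgue"
    and bound: "AE \<zeta> in lebesgue. norm (f \<zeta>) \<le> M * indicator (ball 0 c) \<zeta>"
    and "0 \<le> c" and "c < norm z"
  shows "(\<lambda>k. moment f k / z ^ Suc k) sums (LINT \<zeta>|lebesgue. f \<zeta> / (z - \<zeta>))"
proof -
  define q where "q = c / norm z"
  have q: "0 \<le> q" "q < 1" and "z \<noteq> 0"
    using assms(3,4) by (auto simp: q_def divide_less_eq)
  define g where "g k \<zeta> = f \<zeta> / z * (\<zeta> / z) ^ k" for k \<zeta>
  have g_bound: "AE \<zeta> in lebesgue. norm (g k \<zeta>) \<le> (M / norm z * q ^ k) * indicator (ball 0 c) \<zeta>"
    for k
    using bound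
  proof eventually_elim
    case (elim \<zeta>)
    show ?case
    proof (cases "\<zeta> \<in> ball 0 c")
      case True
      have "norm (g k \<zeta>) = norm (f \<zeta>) / norm z * (norm \<zeta> / norm z) ^ k"
        by (simp add: g_def norm_mult norm_divide norm_power)
      also have "\<dots> \<le> M / norm z * q ^ k"
      proof (intro mult_mono divide_right_mono power_mono)
        show "norm (f \<zeta>) \<le> M" and "norm \<zeta> / norm z \<le> q"
          using elim True by (auto simp: q_def divide_right_mono)
        then show "0 \<le> M / norm z"
          by (simp add: order_trans[OF norm_ge_zero])
      qed simp_all
      finally show ?thesis
        using True by simp
    qed (use elim in \<open>simp add: g_def\<close>)
  qed
  have "(\<lambda>k. integral\<^sup>L lebesgue (g k)) sums (LINT \<zeta>|lebesgue. (\<Sum>k. g k \<zeta>))"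
    by (rule sums_integral_if_norm_le_indicator[OF _ lmeasurable_ball g_bound])
      (use q in \<open>auto simp: g_def intro!: summable_mult summable_geometric\<close>)
  moreover have "(LINT \<zeta>|lebesgue. (\<Sum>k. g k \<zeta>)) = (LINT \<zeta>|lebesgue. f \<zeta> / (z - \<zeta>))"
  proof (rule integral_cong_AE)
    show "AE \<zeta> in lebesgue. (\<Sum>k. g k \<zeta>) = f \<zeta> / (z - \<zeta>)"
      using bound
    proof eventually_elim
      case (elim \<zeta>)
      show ?case
      proof (cases "\<zeta> \<in> ball 0 c")
        case True
        then have "norm (\<zeta> / z) < 1"
          using assms(4) by (simp add: norm_divide divide_less_eq)
        then have "(\<lambda>k. f \<zeta> / z * (\<zeta> / z) ^ k) sums (f \<zeta> / z * (1 / (1 - \<zeta> / z)))"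
          by (intro sums_mult geometric_sums)
        moreover have "f \<zeta> / z * (1 / (1 - \<zeta> / z)) = f \<zeta> / (z - \<zeta>)"
          using \<open>z \<noteq> 0\<close> \<open>norm (\<zeta> / z) < 1\<close> by (auto simp: field_simps)
        ultimately show ?thesis
          by (simp add: g_def sums_iff)
      qed (use elim in \<open>simp add: g_def\<close>)
    qed
  qed (auto simp: g_def)
  moreover have "integral\<^sup>L lebesgue (g k) = moment f k / z ^ Suc k" for k
  proof -
    have "g k = (\<lambda>\<zeta>. f \<zeta> * \<zeta> ^ k / z ^ Suc k)"
      by (auto simp: g_def power_divide)
    then show ?thesis
      by (simp add: moment_def)
  qed
  ultimately show ?thesis
    by simp
qed

lemma cauchy_transform_eq_poly_inverse_if_moments_vanish:
  fixes f :: "complex \<Rightarrow> complex"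
  assumes "f \<in> borel_measurable lebesgue"
    and "AE \<zeta> in lebesgue. norm (f \<zeta>) \<le> M * indicator (ball 0 c) \<zeta>"
    and "0 \<le> c" and vanish: "\<And>k. N \<le> k \<Longrightarrow> moment f k = 0"
  shows "\<exists>p. \<forall>z. c < norm z \<longrightarrow> cauchy_transform f z = poly p (inverse z)"
proof (intro exI allI impI)
  fix z :: complex
  assume "c < norm z"
  have "(\<lambda>k. moment f k / z ^ Suc k) sums (LINT \<zeta>|lebesgue. f \<zeta> / (z - \<zeta>))"
    by (rule moment_div_power_sums) fact+
  moreover have "(\<lambda>k. moment f k / z ^ Suc k) sums (\<Sum>k<N. moment f k / z ^ Suc k)"
    by (rule sums_finite) (use vanish in auto)
  ultimately have "cauchy_transform f z = 1 / of_real pi * (\<Sum>k<N. moment f k / z ^ Suc k)"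
    by (simp add: cauchy_transform_def sums_unique2)
  also have "\<dots> = poly (\<Sum>k<N. monom (moment f k / of_real pi) (Suc k)) (inverse z)"
    by (simp add: poly_sum poly_monom sum_distrib_left divide_inverse power_inverse mult_ac)
  finally show "cauchy_transform f z
      = poly (\<Sum>k<N. monom (moment f k / of_real pi) (Suc k)) (inverse z)" .
qed

section \<open>Conjugate power series on an annulus\<close>

lemma borel_measurable_cnj [measurable]: "cnj \<in> borel_measurable borel"
  by (intro borel_measurable_continuous_onI continuous_on_cnj continuous_on_id)

lemma integral_annulus_cnj_power_eq_0:
  fixes h :: "complex \<Rightarrow> complex" and m :: int
  assumes [measurable]: "h \<in> borel_measurable borel"
    and homogeneous: "\<And>w z. norm w = 1 \<Longrightarrow> h (w * z) = w powi m * h z"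
    and "m \<noteq> int n"
  shows "(LINT z|lebesgue. indicator (annulus b c) z * cnj z ^ n * h z) = 0"
proof -
  obtain w :: complex where w: "norm w = 1" "\<And>k. k > 0 \<Longrightarrow> w ^ k \<noteq> 1"
    using exists_unit_not_root_of_unity by blast
  then have "w \<noteq> 0"
    by auto
  have "w * cnj w = 1"
    using w(1) by (simp add: complex_mult_cnj cmod_def)
  then have cnj_w: "cnj w = inverse w"
    by (simp add: inverse_unique)
  \<comment> \<open>Rotating by \<open>w\<close> multiplies the integrand by \<open>w powi (m - n) \<noteq> 1\<close>.\<close>
  show ?thesis
  proof (rule integral_lebesgue_eq_0_if_rotation_twisted[OF w(1)])
    fix z
    have "w powi (m - int n) = w powi m * inverse w ^ n"
      using \<open>w \<noteq> 0\<close> by (simp add: power_int_diff divide_inverse power_inverse)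
    moreover have "indicator (annulus b c) (w * z) = (indicator (annulus b c) z :: complex)"
      using w(1) by (simp add: annulus_def norm_mult indicator_def)
    ultimately show "indicator (annulus b c) (w * z) * cnj (w * z) ^ n * h (w * z)
        = w powi (m - int n) * (indicator (annulus b c) z * cnj z ^ n * h z)"
      using w(1) by (simp add: homogeneous cnj_w power_mult_distrib mult_ac)
    show "w powi (m - int n) \<noteq> 1"
    proof (cases "m - int n > 0")
      case True
      then show ?thesis
        using w(2)[of "nat (m - int n)"] by (simp add: power_int_def)
    next
      case False
      then show ?thesis
        using w(2)[of "nat (- (m - int n))"] \<open>m \<noteq> int n\<close> by (auto simp: power_int_def power_inverse)
    qed
  qed measurable
qed

definition annular_conj_series :: "real \<Rightarrow> real \<Rightarrow> (nat \<Rightarrow> complex) \<Rightarrow> complex \<Rightarrow> complex" where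
  "annular_conj_series b c d z = indicator (annulus b c) z * (\<Sum>k. d k * cnj z ^ k)"

lemma
  assumes "summable (\<lambda>k. norm (d k) * c ^ k)" and "norm z \<le> c"
  shows summable_norm_conj_series: "summable (\<lambda>k. norm (d k * cnj z ^ k))"
    and norm_conj_series_le: "norm (\<Sum>k. d k * cnj z ^ k) \<le> (\<Sum>k. norm (d k) * c ^ k)"
proof -
  have term_le: "norm (d k * cnj z ^ k) \<le> norm (d k) * c ^ k" for k
    using assms(2) by (simp add: norm_mult norm_power mult_left_mono power_mono)
  show summable: "summable (\<lambda>k. norm (d k * cnj z ^ k))"
    by (rule summable_comparison_test'[OF assms(1), of 0]) (simp add: term_le)
  have "norm (\<Sum>k. d k * cnj z ^ k) \<le> (\<Sum>k. norm (d k * cnj z ^ k))"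
    by (rule summable_norm[OF summable])
  also have "\<dots> \<le> (\<Sum>k. norm (d k) * c ^ k)"
    by (rule suminf_le[OF term_le summable assms(1)])
  finally show "norm (\<Sum>k. d k * cnj z ^ k) \<le> (\<Sum>k. norm (d k) * c ^ k)" .
qed

lemma norm_annular_conj_series_le:
  assumes "summable (\<lambda>k. norm (d k) * c ^ k)" and "0 \<le> c"
  shows "norm (annular_conj_series b c d z) \<le> (\<Sum>k. norm (d k) * c ^ k)"
proof (cases "z \<in> annulus b c")
  case True
  then show ?thesis
    using norm_conj_series_le[OF assms(1)] by (simp add: annular_conj_series_def annulus_def)
next
  case False
  then show ?thesis
    using assms by (simp add: annular_conj_series_def suminf_nonneg)
qed

lemma borel_measurable_annular_conj_series [measurable]:
  assumes "summable (\<lambda>k. norm (d k) * c ^ k)"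
  shows "annular_conj_series b c d \<in> borel_measurable borel"
proof (rule borel_measurable_LIMSEQ_metric)
  show "(\<lambda>z. indicator (annulus b c) z * (\<Sum>k<n. d k * cnj z ^ k)) \<in> borel_measurable borel" for n
    by measurable
  fix z :: complex
  show "(\<lambda>n. indicator (annulus b c) z * (\<Sum>k<n. d k * cnj z ^ k)) \<longlonglongrightarrow> annular_conj_series b c d z"
  proof (cases "z \<in> annulus b c")
    case True
    then have "summable (\<lambda>k. d k * cnj z ^ k)"
      using summable_norm_conj_series[OF assms] by (simp add: annulus_def summable_norm_cancel)
    then show ?thesis
      unfolding annular_conj_series_def by (intro tendsto_mult_left summable_LIMSEQ)
  qed (simp add: annular_conj_series_def)
qed

lemma annular_conj_series_mult_integral_sums:
  assumes summable: "summable (\<lambda>k. norm (d k) * c ^ k)"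
    and [measurable]: "h \<in> borel_measurable borel"
    and h_bound: "\<And>z. z \<in> annulus b c \<Longrightarrow> norm (h z) \<le> B"
  shows "(\<lambda>n. d n * (LINT z|lebesgue. indicator (annulus b c) z * cnj z ^ n * h z))
      sums (LINT z|lebesgue. annular_conj_series b c d z * h z)"
proof -
  define f where "f = (\<lambda>n z. d n * (indicator (annulus b c) z * cnj z ^ n * h z))"
  have f_bound: "norm (f n z) \<le> norm (d n) * c ^ n * B * indicator (annulus b c) z" for n z
  proof (cases "z \<in> annulus b c")
    case True
    then have "norm z \<le> c"
      by (simp add: annulus_def)
    then have "0 \<le> c"
      using norm_ge_zero[of z] by linarith
    have "norm (d n) * norm z ^ n \<le> norm (d n) * c ^ n"
      using \<open>norm z \<le> c\<close> by (intro mult_left_mono power_mono) auto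
    then have "norm (d n) * norm z ^ n * norm (h z) \<le> norm (d n) * c ^ n * B"
      by (rule mult_mono[OF _ h_bound[OF True]]) (simp_all add: \<open>0 \<le> c\<close>)
    then show ?thesis
      using True by (simp add: f_def norm_mult norm_power)
  qed (simp add: f_def)
  have "(\<lambda>n. integral\<^sup>L lebesgue (f n)) sums (LINT z|lebesgue. (\<Sum>n. f n z))"
  proof (rule sums_integral_if_norm_le_indicator[OF _ lmeasurable_annulus,
        where a = "\<lambda>n. norm (d n) * c ^ n * B"])
    show "f n \<in> borel_measurable lebesgue" for n
      unfolding f_def by (intro borel_measurable_lebesgue_if_borel) measurable
  qed (use f_bound summable in \<open>auto intro: summable_mult2\<close>)
  moreover have "(\<Sum>n. f n z) = annular_conj_series b c d z * h z" for z
  proof (cases "z \<in> annulus b c")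
    case True
    then have "summable (\<lambda>n. d n * cnj z ^ n)"
      using summable_norm_conj_series[OF summable] by (simp add: annulus_def summable_norm_cancel)
    moreover have "f n z = d n * cnj z ^ n * h z" for n
      using True by (simp add: f_def mult.assoc)
    ultimately show ?thesis
      using True by (simp add: annular_conj_series_def suminf_mult2)
  qed (simp add: f_def annular_conj_series_def)
  ultimately show ?thesis
    by (simp add: f_def)
qed

lemma moment_annular_conj_series:
  assumes "summable (\<lambda>k. norm (d k) * c ^ k)"
  shows "moment (annular_conj_series b c d) k
    = d k * complex_of_real (LINT z|lebesgue. indicator (annulus b c) z * norm z ^ (2 * k))"
proof -
  have "(\<lambda>n. d n * (LINT z|lebesgue. indicator (annulus b c) z * cnj z ^ n * z ^ k))
      sums moment (annular_conj_series b c d) k"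
    unfolding moment_def
    by (rule annular_conj_series_mult_integral_sums[OF assms, where B = "c ^ k"])
      (auto simp: annulus_def norm_power intro: power_mono)
  moreover have "(LINT z|lebesgue. indicator (annulus b c) z * cnj z ^ n * z ^ k) = 0"
    if "n \<noteq> k" for n
    by (rule integral_annulus_cnj_power_eq_0[where m = "int k"])
      (use that in \<open>simp_all add: power_mult_distrib\<close>)
  then have "(\<lambda>n. d n * (LINT z|lebesgue. indicator (annulus b c) z * cnj z ^ n * z ^ k))
      = (\<lambda>n. if n = k then d k * (LINT z|lebesgue. indicator (annulus b c) z * cnj z ^ k * z ^ k) else 0)"
    by auto
  ultimately have "(\<lambda>n. if n = k then d k * (LINT z|lebesgue. indicator (annulus b c) z * cnj z ^ k * z ^ k)
      else 0) sums moment (annular_conj_series b c d) k"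
    by simp
  then have "moment (annular_conj_series b c d) k
      = d k * (LINT z|lebesgue. indicator (annulus b c) z * cnj z ^ k * z ^ k)"
    by (rule sums_unique2[OF _ sums_single[of k "\<lambda>_. _"]])
  also have "(\<lambda>z. indicator (annulus b c) z * cnj z ^ k * z ^ k)
      = (\<lambda>z. complex_of_real (indicator (annulus b c) z * norm z ^ (2 * k)))"
  proof
    fix z :: complex
    have "cnj z ^ k * z ^ k = (z * cnj z) ^ k"
      by (simp add: power_mult_distrib mult.commute)
    also have "\<dots> = complex_of_real (norm z ^ (2 * k))"
      by (simp add: power_mult flip: complex_norm_square)
    finally show "indicator (annulus b c) z * cnj z ^ k * z ^ k
        = complex_of_real (indicator (annulus b c) z * norm z ^ (2 * k))"
      by (simp add: mult.assoc indicator_def)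
  qed
  also have "integral\<^sup>L lebesgue \<dots>
      = complex_of_real (LINT z|lebesgue. indicator (annulus b c) z * norm z ^ (2 * k))"
    by (rule integral_complex_of_real)
  finally show ?thesis .
qed

lemma cauchy_transform_annular_conj_series_0:
  assumes "summable (\<lambda>k. norm (d k) * c ^ k)" and "0 < b"
  shows "cauchy_transform (annular_conj_series b c d) 0 = 0"
proof -
  have "(\<lambda>n. d n * (LINT z|lebesgue. indicator (annulus b c) z * cnj z ^ n * (- inverse z)))
      sums (LINT z|lebesgue. annular_conj_series b c d z * (- inverse z))"
    by (rule annular_conj_series_mult_integral_sums[OF assms(1), where B = "1 / b"])
      (use assms(2) in \<open>auto simp: annulus_def norm_divide inverse_eq_divide intro!: frac_le\<close>)
  moreover have "(LINT z|lebesgue. indicator (annulus b c) z * cnj z ^ n * (- inverse z)) = 0" for n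
    by (rule integral_annulus_cnj_power_eq_0[where m = "-1"]) (simp_all add: power_int_minus)
  ultimately show ?thesis
    by (simp add: cauchy_transform_def sums_iff divide_inverse)
qed

section \<open>Cancelling the high moments\<close>

lemma measure_annulus_pos:
  assumes "0 \<le> b" and "b < c"
  shows "0 < measure lebesgue (annulus b c)"
proof -
  define w where "w = complex_of_real ((b + c) / 2)"
  have "ball w ((c - b) / 2) \<subseteq> annulus b c"
  proof
    fix z
    assume "z \<in> ball w ((c - b) / 2)"
    then have "dist w z < (c - b) / 2"
      by simp
    moreover have "norm w = (b + c) / 2"
      using assms unfolding w_def norm_of_real by simp
    moreover have "norm w - dist w z \<le> norm z" and "norm z \<le> norm w + dist w z"
      using norm_triangle_ineq2[of w z] norm_triangle_ineq2[of z w]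
      by (auto simp: dist_norm norm_minus_commute)
    ultimately show "z \<in> annulus b c"
      unfolding annulus_def by simp
  qed
  then have "measure lebesgue (ball w ((c - b) / 2)) \<le> measure lebesgue (annulus b c)"
    by (intro measure_mono_fmeasurable lmeasurable_annulus) auto
  moreover have "0 < measure lebesgue (ball w ((c - b) / 2))"
    using assms by (simp add: content_ball_pos)
  ultimately show ?thesis
    by linarith
qed

lemma integral_annulus_norm_power_ge:
  assumes "0 \<le> b"
  shows "measure lebesgue (annulus b c) * b ^ (2 * k)
    \<le> (LINT z|lebesgue. indicator (annulus b c) z * norm z ^ (2 * k))"
proof -
  have "measure lebesgue (annulus b c) * b ^ (2 * k)
      = (LINT z|lebesgue. b ^ (2 * k) * indicator (annulus b c) z)"
    using lmeasurable_annulus by (simp add: fmeasurable_def)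
  also have "\<dots> \<le> (LINT z|lebesgue. indicator (annulus b c) z * norm z ^ (2 * k))"
  proof (rule integral_mono)
    show "integrable lebesgue (\<lambda>z. b ^ (2 * k) * indicator (annulus b c) z :: real)"
      using lmeasurable_annulus by (intro integrable_mult_right) (auto simp: fmeasurable_def)
    show "integrable lebesgue (\<lambda>z. indicator (annulus b c) z * norm z ^ (2 * k) :: real)"
      by (rule integrable_if_norm_le_indicator[OF _ lmeasurable_annulus, where B = "c ^ (2 * k)"])
        (auto simp: annulus_def indicator_def intro!: power_mono)
    show "b ^ (2 * k) * indicator (annulus b c) z \<le> indicator (annulus b c) z * norm z ^ (2 * k)" for z
      using assms by (auto simp: annulus_def indicator_def intro!: power_mono)
  qed
  finally show ?thesis .
qed

lemma exists_annular_correction_cancelling_moments: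
  fixes f :: "complex \<Rightarrow> complex"
  assumes [measurable]: "f \<in> borel_measurable lebesgue"
    and f_bound: "AE z in lebesgue. norm (f z) \<le> M * indicator (ball 0 \<rho>) z"
    and "0 \<le> \<rho>" and "0 < b" and "b < c" and "\<rho> * c < b\<^sup>2" and "0 < \<epsilon>"
  obtains \<nu> where "\<nu> \<in> borel_measurable lebesgue" and "\<And>z. z \<notin> annulus b c \<Longrightarrow> \<nu> z = 0"
    and "Linf_norm \<nu> < ereal \<epsilon>" and "cauchy_transform \<nu> 0 = 0"
    and "\<exists>N. \<forall>k\<ge>N. moment \<nu> k = - moment f k"
proof -
  define J where "J k = (LINT z|lebesgue. indicator (annulus b c) z * norm z ^ (2 * k))" for k
  define lA where "lA = measure lebesgue (annulus b c)"
  define L where "L = measure lebesgue (ball (0::complex) \<rho>)"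
  define q where "q = \<rho> * c / b\<^sup>2"
  define e where "e k = - moment f k / complex_of_real (J k)" for k
  have lA: "0 < lA"
    unfolding lA_def by (rule measure_annulus_pos) (use assms(4,5) in auto)
  have J: "lA * b ^ (2 * k) \<le> J k" "0 < J k" for k
    using integral_annulus_norm_power_ge[of b c k] lA assms(4)
    by (auto simp: J_def lA_def intro: less_le_trans[of 0 "lA * b ^ (2 * k)"])
  have q: "0 \<le> q" "q < 1"
    using assms(3-6) by (simp_all add: q_def)
  have e_le: "norm (e k) * c ^ k \<le> M * L / lA * q ^ k" for k
  proof -
    have moment_le: "norm (moment f k) \<le> M * \<rho> ^ k * L"
      unfolding L_def by (rule norm_moment_le[OF assms(1,2)])
    have "norm (e k) * c ^ k = norm (moment f k) / J k * c ^ k"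
      using J(2)[of k] by (simp add: e_def norm_divide)
    also have "\<dots> \<le> (M * \<rho> ^ k * L) / (lA * b ^ (2 * k)) * c ^ k"
      using moment_le order_trans[OF norm_ge_zero moment_le] J[of k] lA assms(4,5)
      by (intro mult_right_mono frac_le) auto
    also have "\<dots> = M * L / lA * q ^ k"
      using lA assms(4) by (simp add: q_def power_mult power_divide power_mult_distrib field_simps
          flip: power_mult_distrib power_mult)
    finally show ?thesis .
  qed
  have summable_e: "summable (\<lambda>k. norm (e k) * c ^ k)"
    by (rule summable_comparison_test'[of "\<lambda>k. M * L / lA * q ^ k" 0])
      (use q e_le assms(4,5) in \<open>auto intro!: summable_mult summable_geometric\<close>)
  obtain N where tail: "norm (\<Sum>k. norm (e (k + N)) * c ^ (k + N)) < \<epsilon>"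
    using suminf_exist_split[OF assms(7) summable_e] by blast
  define d where "d k = (if N \<le> k then e k else 0)" for k
  have summable_d: "summable (\<lambda>k. norm (d k) * c ^ k)"
    by (rule summable_comparison_test'[OF summable_e, of 0]) (use assms(4,5) in \<open>simp add: d_def\<close>)
  have "(\<Sum>k. norm (d k) * c ^ k) = (\<Sum>k. norm (e (k + N)) * c ^ (k + N))"
    using suminf_split_initial_segment[OF summable_d, of N] by (simp add: d_def)
  then have d_small: "(\<Sum>k. norm (d k) * c ^ k) < \<epsilon>"
    using tail by simp
  define \<nu> where "\<nu> = annular_conj_series b c d"
  show ?thesis
  proof
    show "\<nu> \<in> borel_measurable lebesgue"
      unfolding \<nu>_def
      by (intro borel_measurable_lebesgue_if_borel borel_measurable_annular_conj_series summable_d)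
    show "\<nu> z = 0" if "z \<notin> annulus b c" for z
      using that by (simp add: \<nu>_def annular_conj_series_def)
    have "Linf_norm \<nu> \<le> ereal (\<Sum>k. norm (d k) * c ^ k)"
      by (rule Linf_norm_le[OF \<open>\<nu> \<in> borel_measurable lebesgue\<close>])
        (use summable_d assms(4,5) in \<open>simp add: \<nu>_def norm_annular_conj_series_le\<close>)
    then show "Linf_norm \<nu> < ereal \<epsilon>"
      using d_small by (simp add: le_less_trans)
    show "cauchy_transform \<nu> 0 = 0"
      unfolding \<nu>_def using summable_d assms(4) by (rule cauchy_transform_annular_conj_series_0)
    have "moment \<nu> k = - moment f k" if "N \<le> k" for k
      using that J(2)[of k]
      by (simp add: \<nu>_def moment_annular_conj_series[OF summable_d] d_def e_def flip: J_def)
    then show "\<exists>N. \<forall>k\<ge>N. moment \<nu> k = - moment f k"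
      by blast
  qed
qed

lemma exists_correction_with_polynomial_cauchy_transform:
  fixes f :: "complex \<Rightarrow> complex"
  assumes [measurable]: "f \<in> borel_measurable lebesgue"
    and f_bound: "AE z in lebesgue. norm (f z) \<le> M * indicator (annulus r \<rho>) z"
    and "0 \<le> M" and "0 < r" and "r \<le> \<rho>" and "\<rho> < b" and "b < c" and "\<rho> * c < b\<^sup>2"
    and "0 < \<epsilon>"
  obtains g where "g \<in> borel_measurable lebesgue"
    and "esupp g \<subseteq> esupp f \<union> {z. b \<le> norm z \<and> norm z \<le> c}"
    and "Linf_norm (\<lambda>z. g z - f z) < ereal \<epsilon>"
    and "cauchy_transform g 0 = cauchy_transform f 0"
    and "\<exists>p. \<forall>z. c < norm z \<longrightarrow> cauchy_transform g z = poly p (inverse z)"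
proof -
  have "0 < b"
    using assms(4-6) by linarith
  have f_ball: "AE z in lebesgue. norm (f z) \<le> M * indicator (ball 0 \<rho>) z"
    by (rule AE_norm_le_indicator_mono[OF f_bound _ assms(3)]) (auto simp: annulus_def)
  obtain \<nu> where \<nu>_measurable [measurable]: "\<nu> \<in> borel_measurable lebesgue"
    and \<nu>_outside: "\<And>z. z \<notin> annulus b c \<Longrightarrow> \<nu> z = 0"
    and \<nu>_Linf: "Linf_norm \<nu> < ereal \<epsilon>" and \<nu>_cauchy_0: "cauchy_transform \<nu> 0 = 0"
    and \<nu>_moments: "\<exists>N. \<forall>k\<ge>N. moment \<nu> k = - moment f k"
    by (rule exists_annular_correction_cancelling_moments[OF assms(1) f_ball, where b = b and c = c and \<epsilon> = \<epsilon>])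
      (use assms \<open>0 < b\<close> in auto)
  have "AE z in lebesgue. norm (\<nu> z) \<le> \<epsilon>"
    using \<nu>_Linf by (intro AE_norm_le_if_Linf_norm_le) simp
  then have \<nu>_bound: "AE z in lebesgue. norm (\<nu> z) \<le> \<epsilon> * indicator (annulus b c) z"
    by (rule eventually_mono) (auto simp: indicator_def \<nu>_outside)
  define g where "g = (\<lambda>z. f z + \<nu> z)"
  show ?thesis
  proof
    show "g \<in> borel_measurable lebesgue"
      unfolding g_def by measurable
    have "esupp \<nu> \<subseteq> {z. b \<le> norm z \<and> norm z \<le> c}"
      by (rule esupp_subset_if_AE_eq_0)
        (auto intro!: closed_Collect_conj closed_Collect_le continuous_intros \<nu>_outside simp: annulus_def)
    then show "esupp g \<subseteq> esupp f \<union> {z. b \<le> norm z \<and> norm z \<le> c}"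
      using esupp_add_subset[of f \<nu>] unfolding g_def by blast
    show "Linf_norm (\<lambda>z. g z - f z) < ereal \<epsilon>"
      using \<nu>_Linf by (simp add: g_def)
    have "cauchy_transform g 0 = cauchy_transform f 0 + cauchy_transform \<nu> 0"
      unfolding g_def
      by (intro cauchy_transform_add integrable_cauchy_kernel_0[OF _ f_bound]
          integrable_cauchy_kernel_0[OF _ \<nu>_bound]) (use assms(4) \<open>0 < b\<close> in auto)
    then show "cauchy_transform g 0 = cauchy_transform f 0"
      by (simp add: \<nu>_cauchy_0)
    have \<nu>_ball: "AE z in lebesgue. norm (\<nu> z) \<le> \<epsilon> * indicator (ball 0 c) z"
      by (rule AE_norm_le_indicator_mono[OF \<nu>_bound]) (use assms(9) in \<open>auto simp: annulus_def\<close>)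
    have f_ball': "AE z in lebesgue. norm (f z) \<le> M * indicator (ball 0 c) z"
      by (rule AE_norm_le_indicator_mono[OF f_ball]) (use assms(3,6,7) in \<open>auto simp: annulus_def\<close>)
    obtain N where N: "\<And>k. N \<le> k \<Longrightarrow> moment \<nu> k = - moment f k"
      using \<nu>_moments by blast
    have "moment g k = 0" if "N \<le> k" for k
      unfolding g_def using N[OF that]
      by (simp add: moment_add integrable_moment[OF _ f_ball'] integrable_moment[OF _ \<nu>_ball])
    moreover have "AE z in lebesgue. norm (g z) \<le> (M + \<epsilon>) * indicator (ball 0 c) z"
      using f_ball' \<nu>_ball
      by eventually_elim (auto simp: g_def indicator_def intro: norm_triangle_le)
    ultimately show "\<exists>p. \<forall>z. c < norm z \<longrightarrow> cauchy_transform g z = poly p (inverse z)"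
      using \<open>0 < b\<close> assms(7) \<open>g \<in> borel_measurable lebesgue\<close>
      by (intro cauchy_transform_eq_poly_inverse_if_moments_vanish) auto
  qed
qed

theorem lemma6p7:
  fixes \<mu> :: "complex \<Rightarrow> complex" and \<rho>0 \<rho>1 r1 \<epsilon> :: real
  assumes "\<mu> \<in> borel_measurable lebesgue"
    and "Linf_norm \<mu> \<le> 1"
    and "esupp \<mu> \<subseteq> annulus \<rho>0 \<rho>1"
    and "0 < \<rho>0" and "\<rho>0 < \<rho>1" and "\<rho>1 < 1"
    and "\<rho>1 < r1" and "r1 < 1"
    and "\<epsilon> > 0"
  shows "\<exists>\<mu>' :: complex \<Rightarrow> complex. \<mu>' \<in> borel_measurable lebesgue
           \<and> esupp \<mu>' \<subseteq> annulus \<rho>0 r1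
           \<and> Linf_norm (\<lambda>z. \<mu>' z - \<mu> z) < ereal \<epsilon>
           \<and> cauchy_transform \<mu>' 0 = cauchy_transform \<mu> 0
           \<and> (\<exists>p :: complex poly. \<forall>z. norm z > 1 \<longrightarrow> cauchy_transform \<mu>' z = poly p (inverse z))"
proof -
  have \<mu>_bound: "AE z in lebesgue. norm (\<mu> z) \<le> 1 * indicator (annulus \<rho>0 \<rho>1) z"
    using assms(2,3) by (intro AE_norm_le_indicator_if_esupp_subset) (simp_all add: one_ereal_def)
  obtain b where b: "\<rho>1 < b" "b < r1"
    using assms(7) dense by blast
  have "b < b\<^sup>2 / \<rho>1"
    using b assms(4,5) by (simp add: power2_eq_square field_simps)
  then obtain c where c: "b < c" "c < r1" "\<rho>1 * c < b\<^sup>2"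
    using dense[of b "min r1 (b\<^sup>2 / \<rho>1)"] b assms(4,5) by (auto simp: field_simps)
  obtain \<mu>' where "\<mu>' \<in> borel_measurable lebesgue"
    and support: "esupp \<mu>' \<subseteq> esupp \<mu> \<union> {z. b \<le> norm z \<and> norm z \<le> c}"
    and "Linf_norm (\<lambda>z. \<mu>' z - \<mu> z) < ereal \<epsilon>" "cauchy_transform \<mu>' 0 = cauchy_transform \<mu> 0"
    and poly: "\<exists>p. \<forall>z. c < norm z \<longrightarrow> cauchy_transform \<mu>' z = poly p (inverse z)"
    by (rule exists_correction_with_polynomial_cauchy_transform[OF assms(1) \<mu>_bound,
          where b = b and c = c and \<epsilon> = \<epsilon>]) (use assms b c in auto)
  moreover have "esupp \<mu> \<union> {z. b \<le> norm z \<and> norm z \<le> c} \<subseteq> annulus \<rho>0 r1"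
    using assms(3,5) b c by (auto simp: annulus_def)
  with support have "esupp \<mu>' \<subseteq> annulus \<rho>0 r1"
    by blast
  moreover have "\<exists>p. \<forall>z. 1 < norm z \<longrightarrow> cauchy_transform \<mu>' z = poly p (inverse z)"
    using poly c(2) assms(8) by force
  ultimately show ?thesis
    by blast
qed

end
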